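(* Let $\Omega_H$ be the infinite hexagonal lattice graph (the infinite 3-regular honeycomb lattice, whose faces are hexagons). Then $\chi_{td}(\Omega_H) = 7$.
   Context: For a (possibly infinite) simple graph $G$ and a positive integer $k$, a proper $k$-total difference labeling of $G$ is a function $f: V(G)\to\{1,\dots,k\}$, extended to edges by $f(\{u,v\}) = |f(u)-f(v)|$, such that: (i) adjacent vertices receive different labels; (ii) two distinct edges sharing a vertex receive different labels; (iii) no edge receives the same label as either of its endpoints. $\chi_{td}(G)$ denotes the smallest $k$ for which $G$ has a proper $k$-total difference labeling. *)

theory Defs
  imports Main
begin

definition simple_graph :: "('a \<Rightarrow> 'a \<Rightarrow> bool) \<Rightarrow> bool" where
  "simple_graph E \<longleftrightarrow> (\<forall>u v. E u v \<longrightarrow> E v u) \<and> (\<forall>u. \<not> E u u)"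

definition proper_td_labeling :: "('a \<Rightarrow> 'a \<Rightarrow> bool) \<Rightarrow> nat \<Rightarrow> ('a \<Rightarrow> int) \<Rightarrow> bool" where
  "proper_td_labeling E k f \<longleftrightarrow>
     (\<forall>v. f v \<in> {1..int k}) \<and>
     (\<forall>u v. E u v \<longrightarrow> f u \<noteq> f v) \<and>
     (\<forall>u v w. E u v \<and> E u w \<and> v \<noteq> w \<longrightarrow> \<bar>f u - f v\<bar> \<noteq> \<bar>f u - f w\<bar>) \<and>
     (\<forall>u v. E u v \<longrightarrow> \<bar>f u - f v\<bar> \<noteq> f u \<and> \<bar>f u - f v\<bar> \<noteq> f v)"

definition chi_td :: "('a \<Rightarrow> 'a \<Rightarrow> bool) \<Rightarrow> nat" where
  "chi_td E = (LEAST k. k > 0 \<and> (\<exists>f. proper_td_labeling E k f))"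

text \<open>Infinite hexagonal (honeycomb) lattice in brick-wall coordinates:
vertices Z x Z; (i,j) is adjacent to (i+1,j), (i-1,j), and to (i,j+1) if i+j is
even, resp. (i,j-1) if i+j is odd.\<close>

definition hex_adj :: "int \<times> int \<Rightarrow> int \<times> int \<Rightarrow> bool" where
  "hex_adj p q \<longleftrightarrow>
     (snd p = snd q \<and> \<bar>fst p - fst q\<bar> = 1) \<or>
     (fst p = fst q \<and> even (fst p + snd p) \<and> snd q = snd p + 1) \<or>
     (fst p = fst q \<and> odd (fst p + snd p) \<and> snd q = snd p - 1)"

lemma hex_simple: "simple_graph hex_adj"
  unfolding simple_graph_def hex_adj_def by auto

end

theory Submission
  imports Defs
begin

(* With labels from {1..6}, a vertex with three neighbours whose edges carry pairwise distinct
   labels cannot be labelled 3, and any other label c forces some neighbour label from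
   forced_neighbour_labels c. The forced labels always come earlier in the order
   3, 2, 5, 1, 4, 6, so the labels are ruled out one after the other: a graph in which every
   vertex has three neighbours needs seven labels. Seven suffice for the honeycomb in
   brick-wall coordinates: the rows are labelled alternately by the 4-periodic patterns
   1 3 2 7 and 5 7 6 4. *)

definition td_edge_ok :: "int \<Rightarrow> int \<Rightarrow> bool" where
  "td_edge_ok a b \<longleftrightarrow> a \<noteq> b \<and> \<bar>a - b\<bar> \<noteq> a \<and> \<bar>a - b\<bar> \<noteq> b"

lemma proper_td_labeling_iff:
  "proper_td_labeling E k f \<longleftrightarrow>
     (\<forall>v. f v \<in> {1..int k}) \<and>
     (\<forall>u v. E u v \<longrightarrow> td_edge_ok (f u) (f v)) \<and>
     (\<forall>u v w. E u v \<and> E u w \<and> v \<noteq> w \<longrightarrow> \<bar>f v - f u\<bar> \<noteq> \<bar>f w - f u\<bar>)"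
  unfolding proper_td_labeling_def td_edge_ok_def by (auto simp: abs_minus_commute)

lemma td_edge_ok_pos_iff:
  assumes "0 < a" and "0 < b"
  shows "td_edge_ok a b \<longleftrightarrow> a \<noteq> b \<and> a \<noteq> 2 * b \<and> b \<noteq> 2 * a"
  using assms unfolding td_edge_ok_def by linarith

lemma proper_td_labeling_pos:
  assumes "proper_td_labeling E k f"
  shows "0 < k"
proof -
  have "f v \<in> {1..int k}" for v
    using assms by (simp add: proper_td_labeling_def)
  then show ?thesis by fastforce
qed

lemma chi_td_eqI:
  assumes "proper_td_labeling E k f"
    and "\<And>k' g. proper_td_labeling E k' g \<Longrightarrow> k \<le> k'"
  shows "chi_td E = k"
  unfolding chi_td_def
proof (rule Least_equality)
  show "0 < k \<and> (\<exists>f. proper_td_labeling E k f)"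
    using assms(1) proper_td_labeling_pos by blast
  show "k \<le> k'" if "0 < k' \<and> (\<exists>g. proper_td_labeling E k' g)" for k'
    using that assms(2) by blast
qed

definition forced_neighbour_labels :: "int \<Rightarrow> int set" where
  "forced_neighbour_labels c =
     (if c = 1 then {3, 5} else if c = 2 then {3} else if c = 4 then {1, 3}
      else if c = 5 then {2, 3} else if c = 6 then {1, 2} else {})"

lemma int_1_to_6: "{1..6::int} = {1, 2, 3, 4, 5, 6}"
  by auto

lemma td_star_meets_forced_neighbour_labels:
  fixes c x y z :: int
  assumes "{c, x, y, z} \<subseteq> {1..6}"
    and "td_edge_ok c x" "td_edge_ok c y" "td_edge_ok c z"
    and "distinct [\<bar>x - c\<bar>, \<bar>y - c\<bar>, \<bar>z - c\<bar>]"
  shows "{x, y, z} \<inter> forced_neighbour_labels c \<noteq> {}"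
proof -
  from assms(1) have range: "c \<in> {1..6}" "x \<in> {1..6}" "y \<in> {1..6}" "z \<in> {1..6}" by auto
  then have "c \<noteq> x \<and> c \<noteq> 2 * x \<and> x \<noteq> 2 * c" "c \<noteq> y \<and> c \<noteq> 2 * y \<and> y \<noteq> 2 * c"
    "c \<noteq> z \<and> c \<noteq> 2 * z \<and> z \<noteq> 2 * c"
    using assms(2-4) by (simp_all add: td_edge_ok_pos_iff)
  moreover note int_1_to_6
  moreover have "c = 1 \<or> c = 2 \<or> c = 3 \<or> c = 4 \<or> c = 5 \<or> c = 6"
    using range(1) by (simp add: int_1_to_6)
  ultimately show ?thesis
    using assms(5) range(2-4) unfolding forced_neighbour_labels_def
    by (elim disjE) (simp_all, (elim disjE; simp)+)
qed

lemma no_labeling_with_forced_neighbour_labels: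
  fixes f :: "'a \<Rightarrow> int"
  assumes range: "\<And>u. f u \<in> {1..6}"
    and needs: "\<And>u. \<exists>v. f v \<in> forced_neighbour_labels (f u)"
  shows False
proof -
  have not3: "f u \<noteq> 3" for u
    using needs[of u] by (auto simp: forced_neighbour_labels_def)
  have not2: "f u \<noteq> 2" for u
    using needs[of u] not3 by (auto simp: forced_neighbour_labels_def)
  have not5: "f u \<noteq> 5" for u
    using needs[of u] not3 not2 by (auto simp: forced_neighbour_labels_def)
  have not1: "f u \<noteq> 1" for u
    using needs[of u] not3 not5 by (auto simp: forced_neighbour_labels_def)
  have not4: "f u \<noteq> 4" for u
    using needs[of u] not3 not1 by (auto simp: forced_neighbour_labels_def)
  have not6: "f u \<noteq> 6" for u
    using needs[of u] not1 not2 by (auto simp: forced_neighbour_labels_def)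
  show False
    using range[of undefined] not1 not2 not3 not4 not5 not6 by (simp add: int_1_to_6)
qed

lemma proper_td_labeling_degree_three_ge_7:
  assumes degree: "\<And>u. \<exists>v w x. E u v \<and> E u w \<and> E u x \<and> distinct [v, w, x]"
    and f: "proper_td_labeling E k f"
  shows "7 \<le> k"
proof (rule ccontr)
  assume "\<not> 7 \<le> k"
  then have "int k \<le> 6" by simp
  have range: "f u \<in> {1..6}" for u
  proof -
    have "f u \<in> {1..int k}" using f by (simp add: proper_td_labeling_iff)
    with \<open>int k \<le> 6\<close> show ?thesis by auto
  qed
  have "\<exists>v. f v \<in> forced_neighbour_labels (f u)" for u
  proof -
    obtain v w x where nbrs: "E u v" "E u w" "E u x" "distinct [v, w, x]"
      using degree by blast
    have "{f v, f w, f x} \<inter> forced_neighbour_labels (f u) \<noteq> {}"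
      using f nbrs range[of u] range[of v] range[of w] range[of x]
      by (intro td_star_meets_forced_neighbour_labels) (auto simp: proper_td_labeling_iff)
    then show ?thesis by blast
  qed
  with range show False by (rule no_labeling_with_forced_neighbour_labels)
qed

definition hex_vert :: "int \<times> int \<Rightarrow> int \<times> int" where
  "hex_vert p = (fst p, if even (fst p + snd p) then snd p + 1 else snd p - 1)"

lemma hex_adj_iff:
  "hex_adj (i, j) q \<longleftrightarrow> q = (i + 1, j) \<or> q = (i - 1, j) \<or> q = hex_vert (i, j)"
  by (cases q) (auto simp: hex_adj_def hex_vert_def)

lemma hex_neighbours_distinct: "distinct [(i + 1, j), (i - 1, j), hex_vert (i, j)]"
  by (auto simp: hex_vert_def)

definition hex_label :: "int \<times> int \<Rightarrow> int" where
  "hex_label p = (if even (snd p) then [1, 3, 2, 7] else [5, 7, 6, 4]) ! nat (fst p mod 4)"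

lemma hex_label_hex_vert: "hex_label (hex_vert (i, j)) = hex_label (i, j + 1)"
  by (simp add: hex_label_def hex_vert_def)

lemma hex_label_star:
  fixes i j :: int
  defines "c \<equiv> hex_label (i, j)" and "a \<equiv> hex_label (i + 1, j)"
    and "b \<equiv> hex_label (i - 1, j)" and "d \<equiv> hex_label (i, j + 1)"
  shows "c \<in> {1..7} \<and> td_edge_ok c a \<and> td_edge_ok c b \<and> td_edge_ok c d \<and>
    distinct [\<bar>a - c\<bar>, \<bar>b - c\<bar>, \<bar>d - c\<bar>]"
proof -
  have shift: "(i + 1) mod 4 = (i mod 4 + 1) mod 4" "(i - 1) mod 4 = (i mod 4 + 3) mod 4"
    by presburger+
  have "i mod 4 = 0 \<or> i mod 4 = 1 \<or> i mod 4 = 2 \<or> i mod 4 = 3" by presburger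
  then show ?thesis
    unfolding assms hex_label_def
    by (elim disjE) (simp_all add: shift td_edge_ok_def)
qed

lemma hex_label_proper: "proper_td_labeling hex_adj 7 hex_label"
  unfolding proper_td_labeling_iff
proof (intro conjI allI impI)
  fix v show "hex_label v \<in> {1..int 7}"
    using hex_label_star[of "fst v" "snd v"] by simp
next
  fix u v assume "hex_adj u v"
  then show "td_edge_ok (hex_label u) (hex_label v)"
    using hex_label_star[of "fst u" "snd u"]
    by (cases u) (auto simp: hex_adj_iff hex_label_hex_vert)
next
  fix u v w assume "hex_adj u v \<and> hex_adj u w \<and> v \<noteq> w"
  then show "\<bar>hex_label v - hex_label u\<bar> \<noteq> \<bar>hex_label w - hex_label u\<bar>"
    using hex_label_star[of "fst u" "snd u"]
    by (cases u) (auto simp: hex_adj_iff hex_label_hex_vert)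
qed

lemma hex_adj_degree_three:
  "\<exists>v w x. hex_adj u v \<and> hex_adj u w \<and> hex_adj u x \<and> distinct [v, w, x]"
proof -
  obtain i j where u: "u = (i, j)" by (cases u)
  show ?thesis
    unfolding u hex_adj_iff using hex_neighbours_distinct[of i j] by blast
qed

theorem mainTheorem3:
  shows "chi_td hex_adj = 7"
  using hex_label_proper
    proper_td_labeling_degree_three_ge_7[of hex_adj, OF hex_adj_degree_three]
  by (rule chi_td_eqI)

end
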